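(* Let $N_1=(V_1,E_1)$ and $N_2=(V_2,E_2)$ be phylogenetic networks on the same set $S$ of taxa. For every $v_1\in V_1$ and $v_2\in V_2$, if $\ell(v_1)=\ell(v_2)$, then $\mu(v_1)=\mu(v_2)$.
   Context: A phylogenetic network on $S=\{1,\dots,n\}$ is a finite rooted directed acyclic graph whose leaves are bijectively labeled by $S$. For a node $v$ and $i\in S$, $m_i(v)$ is the number of distinct directed paths from $v$ to the leaf $i$, and $\mu(v)=(m_1(v),\dots,m_n(v))$. The nested label $\ell(v)$ is defined by induction on height (largest length of a path to a leaf): $\ell(v)=\{i\}$ for the leaf labeled $i$, and otherwise $\ell(v)$ is the multiset of nested labels of the children of $v$. *)

theory Defs
  imports Main "HOL-Library.Multiset"
begin

definition children :: "('a \<times> 'a) set \<Rightarrow> 'a \<Rightarrow> 'a set" where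
  "children E v = {w. (v, w) \<in> E}"

definition leaves :: "'a set \<Rightarrow> ('a \<times> 'a) set \<Rightarrow> 'a set" where
  "leaves V E = {v \<in> V. children E v = {}}"

definition phylo_network :: "nat \<Rightarrow> 'a set \<Rightarrow> ('a \<times> 'a) set \<Rightarrow> ('a \<Rightarrow> nat) \<Rightarrow> bool" where
  "phylo_network n V E lab \<longleftrightarrow>
     finite V \<and> E \<subseteq> V \<times> V \<and> acyclic E \<and>
     (\<exists>r\<in>V. \<forall>v\<in>V. (r, v) \<in> E\<^sup>*) \<and>
     bij_betw lab (leaves V E) {1..n}"

definition is_path :: "('a \<times> 'a) set \<Rightarrow> 'a list \<Rightarrow> bool" where
  "is_path E p \<longleftrightarrow> p \<noteq> [] \<and> (\<forall>k. Suc k < length p \<longrightarrow> (p ! k, p ! Suc k) \<in> E)"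

definition num_paths :: "'a set \<Rightarrow> ('a \<times> 'a) set \<Rightarrow> ('a \<Rightarrow> nat) \<Rightarrow> nat \<Rightarrow> 'a \<Rightarrow> nat" where
  "num_paths V E lab i v =
     card {p. is_path E p \<and> hd p = v \<and> last p \<in> leaves V E \<and> lab (last p) = i}"

definition mu :: "nat \<Rightarrow> 'a set \<Rightarrow> ('a \<times> 'a) set \<Rightarrow> ('a \<Rightarrow> nat) \<Rightarrow> 'a \<Rightarrow> nat list" where
  "mu n V E lab v = map (\<lambda>i. num_paths V E lab i v) [1..<Suc n]"

datatype nlabel = NLeaf nat | NNode "nlabel multiset"

text \<open>Recursion on height, implemented with fuel k; correct whenever k > height v.\<close>
fun nlabel_fuel :: "nat \<Rightarrow> 'a set \<Rightarrow> ('a \<times> 'a) set \<Rightarrow> ('a \<Rightarrow> nat) \<Rightarrow> 'a \<Rightarrow> nlabel" where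
  "nlabel_fuel 0 V E lab v = NLeaf (lab v)"
| "nlabel_fuel (Suc k) V E lab v =
     (if v \<in> leaves V E then NLeaf (lab v)
      else NNode (image_mset (nlabel_fuel k V E lab) (mset_set (children E v))))"

text \<open>Every height is < card V, so fuel card V suffices.\<close>
definition nested_label :: "'a set \<Rightarrow> ('a \<times> 'a) set \<Rightarrow> ('a \<Rightarrow> nat) \<Rightarrow> 'a \<Rightarrow> nlabel" where
  "nested_label V E lab v = nlabel_fuel (card V) V E lab v"

end

theory Submission
  imports Defs
begin

text \<open>A path from an inner node \<open>v\<close> is \<open>v\<close> followed by a path from one of its children, so
  \<open>m\<^sub>i\<close> satisfies the recursion \<open>m\<^sub>i(v) = \<Sum>\<^sub>c m\<^sub>i(c)\<close> over the children, with \<open>m\<^sub>i\<close> equal to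
  1 or 0 at a leaf according to its label. The number of occurrences of the leaf label \<open>i\<close> in
  the nested label satisfies the same recursion, so by induction on the height the two agree,
  and \<open>\<mu>(v)\<close> is a function of \<open>\<ell>(v)\<close>.\<close>

lemma is_path_singleton [simp]: "is_path E [v]"
  by (simp add: is_path_def)

lemma is_path_Cons_Cons: "is_path E (v # a # q) \<longleftrightarrow> (v, a) \<in> E \<and> is_path E (a # q)"
  unfolding is_path_def by (simp add: All_less_Suc2)

lemma is_path_Cons: "is_path E (v # q) \<longleftrightarrow> q = [] \<or> (v, hd q) \<in> E \<and> is_path E q"
  by (cases q) (auto simp: is_path_Cons_Cons)

lemma is_path_nth_trancl:
  assumes "is_path E p" "a < b" "b < length p"
  shows "(p ! a, p ! b) \<in> E\<^sup>+"
  using assms(2,3)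
proof (induction b)
  case (Suc b)
  have "(p ! b, p ! Suc b) \<in> E"
    using assms(1) Suc.prems(2) unfolding is_path_def by blast
  with Suc show ?case
    by (cases "a = b") (auto intro: trancl_into_trancl)
qed simp

lemma is_path_distinct:
  assumes "acyclic E" "is_path E p"
  shows "distinct p"
  unfolding distinct_conv_nth
proof (intro allI impI notI)
  fix i j assume ij: "i < length p" "j < length p" "i \<noteq> j" and eq: "p ! i = p ! j"
  have "(p ! min i j, p ! max i j) \<in> E\<^sup>+"
    using is_path_nth_trancl[OF assms(2)] ij by (simp add: min_def max_def)
  with eq have "(p ! i, p ! i) \<in> E\<^sup>+"
    by (cases "i \<le> j") (auto simp: min_def max_def)
  with assms(1) show False
    unfolding acyclic_def by blast
qed

lemma is_path_set_subset:
  assumes "is_path E p" "E \<subseteq> V \<times> V" "hd p \<in> V"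
  shows "set p \<subseteq> V"
proof
  fix x assume "x \<in> set p"
  then obtain k where k: "k < length p" "p ! k = x"
    by (auto simp: in_set_conv_nth)
  show "x \<in> V"
  proof (cases k)
    case 0
    with k assms(1,3) show ?thesis
      by (simp add: hd_conv_nth is_path_def)
  next
    case (Suc j)
    with assms(1) k have "(p ! j, x) \<in> E"
      unfolding is_path_def by blast
    with assms(2) show ?thesis by auto
  qed
qed

lemma is_path_length_le_card:
  assumes "finite V" "acyclic E" "E \<subseteq> V \<times> V" "is_path E p" "hd p \<in> V"
  shows "length p \<le> card V"
proof -
  have "length p = card (set p)"
    using is_path_distinct[OF assms(2,4)] by (simp add: distinct_card)
  also have "\<dots> \<le> card V"
    using is_path_set_subset[OF assms(4,3,5)] assms(1) by (simp add: card_mono)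
  finally show ?thesis .
qed

lemma finite_paths_from:
  assumes "finite V" "acyclic E" "E \<subseteq> V \<times> V" "v \<in> V"
  shows "finite {p. is_path E p \<and> hd p = v}"
proof (rule finite_subset)
  show "{p. is_path E p \<and> hd p = v} \<subseteq> {p. set p \<subseteq> V \<and> length p \<le> card V}"
    using is_path_set_subset[OF _ assms(3)] is_path_length_le_card[OF assms(1-3)] assms(4)
    by auto
  show "finite {p. set p \<subseteq> V \<and> length p \<le> card V}"
    using finite_lists_length_le[OF assms(1)] by simp
qed

definition leaf_paths :: "'a set \<Rightarrow> ('a \<times> 'a) set \<Rightarrow> ('a \<Rightarrow> nat) \<Rightarrow> nat \<Rightarrow> 'a \<Rightarrow> 'a list set" where
  "leaf_paths V E lab i v = {p. is_path E p \<and> hd p = v \<and> last p \<in> leaves V E \<and> lab (last p) = i}"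

lemma num_paths_eq_card_leaf_paths: "num_paths V E lab i v = card (leaf_paths V E lab i v)"
  by (simp add: num_paths_def leaf_paths_def)

lemma leaf_paths_leaf:
  assumes "v \<in> leaves V E"
  shows "leaf_paths V E lab i v = (if lab v = i then {[v]} else {})"
proof -
  have only_path: "p = [v]" if "is_path E p" "hd p = v" for p
  proof -
    from that obtain q where p: "p = v # q"
      by (cases p) (auto simp: is_path_def)
    have "(v, hd q) \<notin> E"
      using assms by (auto simp: leaves_def children_def)
    with that(1) show ?thesis
      by (auto simp: p is_path_Cons)
  qed
  have "p \<in> leaf_paths V E lab i v \<longleftrightarrow> p = [v] \<and> lab v = i" for p
  proof
    assume "p \<in> leaf_paths V E lab i v"
    moreover from this have "p = [v]"
      using only_path[of p] by (simp add: leaf_paths_def)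
    ultimately show "p = [v] \<and> lab v = i"
      by (simp add: leaf_paths_def)
  qed (use assms in \<open>auto simp: leaf_paths_def\<close>)
  then show ?thesis by auto
qed

lemma leaf_paths_inner:
  assumes "v \<notin> leaves V E"
  shows "leaf_paths V E lab i v = (\<Union>c\<in>children E v. Cons v ` leaf_paths V E lab i c)"
proof (intro equalityI subsetI)
  fix p assume p: "p \<in> leaf_paths V E lab i v"
  then obtain q where q: "p = v # q"
    by (cases p) (auto simp: leaf_paths_def is_path_def)
  with p assms have "q \<noteq> []"
    by (auto simp: leaf_paths_def)
  with p q show "p \<in> (\<Union>c\<in>children E v. Cons v ` leaf_paths V E lab i c)"
    by (auto simp: leaf_paths_def children_def is_path_Cons)
next
  fix p assume "p \<in> (\<Union>c\<in>children E v. Cons v ` leaf_paths V E lab i c)"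
  then obtain c q where "c \<in> children E v" "q \<in> leaf_paths V E lab i c" "p = v # q"
    by blast
  moreover from this have "q \<noteq> []"
    by (auto simp: leaf_paths_def is_path_def)
  ultimately show "p \<in> leaf_paths V E lab i v"
    by (auto simp: leaf_paths_def children_def is_path_Cons)
qed

lemma num_paths_leaf:
  "v \<in> leaves V E \<Longrightarrow> num_paths V E lab i v = (if lab v = i then 1 else 0)"
  by (simp add: num_paths_eq_card_leaf_paths leaf_paths_leaf)

lemma num_paths_inner:
  assumes "finite V" "acyclic E" "E \<subseteq> V \<times> V" "v \<notin> leaves V E"
  shows "num_paths V E lab i v = (\<Sum>c\<in>children E v. num_paths V E lab i c)"
proof -
  have children_sub: "children E v \<subseteq> V"
    using assms(3) by (auto simp: children_def)
  have finite_leaf_paths: "finite (Cons v ` leaf_paths V E lab i c)" if "c \<in> children E v" for c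
  proof (intro finite_imageI finite_subset[OF _ finite_paths_from[OF assms(1-3)]])
    show "c \<in> V"
      using that children_sub by blast
  qed (auto simp: leaf_paths_def)
  have disjoint: "Cons v ` leaf_paths V E lab i c \<inter> Cons v ` leaf_paths V E lab i d = {}"
    if "c \<noteq> d" for c d
    using that by (auto simp: leaf_paths_def)
  have "num_paths V E lab i v = card (\<Union>c\<in>children E v. Cons v ` leaf_paths V E lab i c)"
    by (simp add: num_paths_eq_card_leaf_paths leaf_paths_inner[OF assms(4)])
  also have "\<dots> = (\<Sum>c\<in>children E v. card (Cons v ` leaf_paths V E lab i c))"
    using finite_subset[OF children_sub assms(1)] finite_leaf_paths disjoint
    by (simp add: card_UN_disjoint)
  also have "\<dots> = (\<Sum>c\<in>children E v. num_paths V E lab i c)"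
    by (simp add: num_paths_eq_card_leaf_paths card_image)
  finally show ?thesis .
qed

primrec leaf_count :: "nat \<Rightarrow> nlabel \<Rightarrow> nat" where
  "leaf_count i (NLeaf j) = (if j = i then 1 else 0)"
| "leaf_count i (NNode M) = sum_mset (image_mset (leaf_count i) M)"

lemma num_paths_eq_leaf_count_fuel:
  assumes "finite V" "acyclic E" "E \<subseteq> V \<times> V"
    and "\<And>p. is_path E p \<Longrightarrow> hd p = v \<Longrightarrow> length p \<le> k"
  shows "num_paths V E lab i v = leaf_count i (nlabel_fuel k V E lab v)"
  using assms(4)
proof (induction k arbitrary: v)
  case 0
  then show ?case
    using is_path_singleton by fastforce
next
  case (Suc k)
  show ?case
  proof (cases "v \<in> leaves V E")
    case True
    then show ?thesis by (simp add: num_paths_leaf)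
  next
    case False
    have IH: "num_paths V E lab i c = leaf_count i (nlabel_fuel k V E lab c)"
      if "c \<in> children E v" for c
    proof (rule Suc.IH)
      fix p assume p: "is_path E p" "hd p = c"
      then have "p \<noteq> []"
        by (simp add: is_path_def)
      with p that have "is_path E (v # p)"
        by (simp add: is_path_Cons children_def)
      with Suc.prems show "length p \<le> k"
        by fastforce
    qed
    have "finite (children E v)"
      using assms(3) by (intro finite_subset[OF _ assms(1)]) (auto simp: children_def)
    with False show ?thesis
      by (simp add: num_paths_inner[OF assms(1-3) False] IH sum_unfold_sum_mset
          image_mset.compositionality o_def)
  qed
qed

lemma num_paths_eq_leaf_count:
  assumes "finite V" "acyclic E" "E \<subseteq> V \<times> V" "v \<in> V"
  shows "num_paths V E lab i v = leaf_count i (nested_label V E lab v)"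
  unfolding nested_label_def
  using assms is_path_length_le_card[OF assms(1-3)]
  by (intro num_paths_eq_leaf_count_fuel) auto

theorem corollary1:
  fixes n :: nat
    and V1 :: "'a set" and E1 :: "('a \<times> 'a) set" and lab1 :: "'a \<Rightarrow> nat"
    and V2 :: "'b set" and E2 :: "('b \<times> 'b) set" and lab2 :: "'b \<Rightarrow> nat"
  assumes "phylo_network n V1 E1 lab1"
    and "phylo_network n V2 E2 lab2"
    and "v1 \<in> V1" and "v2 \<in> V2"
    and "nested_label V1 E1 lab1 v1 = nested_label V2 E2 lab2 v2"
  shows "mu n V1 E1 lab1 v1 = mu n V2 E2 lab2 v2"
  using assms num_paths_eq_leaf_count[of V1 E1 v1 lab1] num_paths_eq_leaf_count[of V2 E2 v2 lab2]
  by (simp add: mu_def phylo_network_def)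

end
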